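(* Let $k\ge2$, let $A=\{a_1,\dots,a_n\}$ be a sorted multiset of positive integers ($a_1\le\dots\le a_n$), let $p$ be an integer with $1\le p\le n-k+1$, and let $\varepsilon\in(0,1)$. Set $\delta=\frac{\varepsilon\cdot a_p}{3n}$ and $a_i^r=\lfloor a_i/\delta\rfloor$ for $i\in[n]$, $A_r=\{a_1^r,\dots,a_n^r\}$. Let $(S_1,\dots,S_k)$ be an optimal solution of the $k$-SSR$_R$ instance $(A_r,p)$ (this is the output of the algorithm that rounds $A$ to $A_r$ and solves $(A_r,p)$ exactly), and let $(S_1^*,\dots,S_k^* )$ be an optimal solution of the $k$-SSR$_R$ instance $(A,p)$. Then $$\mathcal{R}(S_1,\dots,S_k,A)\le(1+\varepsilon)\cdot\mathcal{R}(S_1^*,\dots,S_k^*,A).$$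
   Context: $[n]=\{1,\dots,n\}$; elements of sets are indices. For a multiset $B=\{b_1,\dots,b_n\}$ of nonnegative integers and $S\subseteq[n]$, $\Sigma(S,B)=\sum_{i\in S}b_i$; for pairwise disjoint $S_1,\dots,S_k\subseteq[n]$, $\mathcal{R}(S_1,\dots,S_k,B)=\max_i\Sigma(S_i,B)/\min_i\Sigma(S_i,B)$ if the minimum is positive and $+\infty$ otherwise. The $k$-SSR$_R$ instance $(B,p)$ (with $b_1\le\dots\le b_n$, $1\le p\le n-k+1$): find pairwise disjoint $S_1,\dots,S_k\subseteq[n]$ with $\max(S_1)=p$ and $\max(S_i)>p$ for $1<i\le k$ minimizing $\mathcal{R}(S_1,\dots,S_k,B)$. *)

theory Defs
  imports Complex_Main "HOL-Library.Extended_Real"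
begin

text \<open>A multiset B = {b_1,...,b_n} is given as a function b :: nat => nat on the indices 1..n.
  A tuple (S_1,...,S_k) is given as a function S :: nat => nat set on the indices 1..k.\<close>

definition Sigma_sum :: "nat set \<Rightarrow> (nat \<Rightarrow> nat) \<Rightarrow> nat" where
  "Sigma_sum S b = (\<Sum>i\<in>S. b i)"

definition ratio_R :: "nat \<Rightarrow> (nat \<Rightarrow> nat set) \<Rightarrow> (nat \<Rightarrow> nat) \<Rightarrow> ereal" where
  "ratio_R k S b =
     (let mx = Max ((\<lambda>i. Sigma_sum (S i) b) ` {1..k});
          mn = Min ((\<lambda>i. Sigma_sum (S i) b) ` {1..k})
      in if mn > 0 then ereal (real mx / real mn) else \<infinity>)"

definition sorted_ms :: "nat \<Rightarrow> (nat \<Rightarrow> nat) \<Rightarrow> bool" where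
  "sorted_ms n b \<longleftrightarrow> (\<forall>i j. 1 \<le> i \<longrightarrow> i \<le> j \<longrightarrow> j \<le> n \<longrightarrow> b i \<le> b j)"

definition kSSR_feasible :: "nat \<Rightarrow> nat \<Rightarrow> nat \<Rightarrow> (nat \<Rightarrow> nat set) \<Rightarrow> bool" where
  "kSSR_feasible n k p S \<longleftrightarrow>
     (\<forall>i\<in>{1..k}. S i \<subseteq> {1..n} \<and> S i \<noteq> {}) \<and>
     (\<forall>i\<in>{1..k}. \<forall>j\<in>{1..k}. i \<noteq> j \<longrightarrow> S i \<inter> S j = {}) \<and>
     Max (S 1) = p \<and>
     (\<forall>i\<in>{2..k}. Max (S i) > p)"

definition kSSR_optimal :: "nat \<Rightarrow> nat \<Rightarrow> (nat \<Rightarrow> nat) \<Rightarrow> nat \<Rightarrow> (nat \<Rightarrow> nat set) \<Rightarrow> bool" where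
  "kSSR_optimal n k b p S \<longleftrightarrow>
     kSSR_feasible n k p S \<and>
     (\<forall>T. kSSR_feasible n k p T \<longrightarrow> ratio_R k S b \<le> ratio_R k T b)"

end

theory Submission
  imports Defs
begin

text \<open>Every part of a feasible solution of \<open>(A, p)\<close> contains an index \<open>\<ge> p\<close>, so its sum
  is at least \<open>a\<^sub>p\<close>. Rounding down at scale \<open>\<delta> = \<epsilon> a\<^sub>p / (3n)\<close> loses less than
  \<open>n\<delta> = (\<epsilon>/3) a\<^sub>p\<close> per part, so rescaled rounded sums are within a factor \<open>1 - \<epsilon>/3\<close> of
  the true ones. Hence the rounded ratio of the optimum \<open>S\<^sup>*\<close>, and by optimality that of
  \<open>S\<close>, is at most \<open>R\<^sup>*/(1 - \<epsilon>/3)\<close>; going back from rounded to true sums for \<open>S\<close>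
  costs an additive \<open>\<epsilon>/3\<close>, and \<open>R\<^sup>*/(1 - \<epsilon>/3) + \<epsilon>/3 \<le> (1 + \<epsilon>) R\<^sup>*\<close> because
  \<open>R\<^sup>* \<ge> 1\<close>.\<close>

lemma floor_div_bounds:
  fixes x d :: real
  assumes "0 < d" "0 \<le> x"
  shows "d * real (nat \<lfloor>x / d\<rfloor>) \<le> x"
    and "x \<le> d * (real (nat \<lfloor>x / d\<rfloor>) + 1)"
proof -
  have nat_floor: "real (nat \<lfloor>x / d\<rfloor>) = of_int \<lfloor>x / d\<rfloor>"
    using assms by simp
  have "d * of_int \<lfloor>x / d\<rfloor> \<le> d * (x / d)"
    using assms(1) by (intro mult_left_mono) linarith+
  then show "d * real (nat \<lfloor>x / d\<rfloor>) \<le> x"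
    unfolding nat_floor using assms(1) by simp
  have "x = d * (x / d)" using assms(1) by simp
  also have "\<dots> \<le> d * (of_int \<lfloor>x / d\<rfloor> + 1)"
    using assms(1) by (intro mult_left_mono) linarith+
  finally show "x \<le> d * (real (nat \<lfloor>x / d\<rfloor>) + 1)"
    unfolding nat_floor .
qed

lemma Sigma_sum_floor_div_bounds:
  assumes "0 < d" "finite T"
  shows "d * real (Sigma_sum T (\<lambda>i. nat \<lfloor>real (b i) / d\<rfloor>)) \<le> real (Sigma_sum T b)"
    and "real (Sigma_sum T b)
           \<le> d * real (Sigma_sum T (\<lambda>i. nat \<lfloor>real (b i) / d\<rfloor>)) + d * real (card T)"
proof -
  show "d * real (Sigma_sum T (\<lambda>i. nat \<lfloor>real (b i) / d\<rfloor>)) \<le> real (Sigma_sum T b)"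
    unfolding Sigma_sum_def of_nat_sum sum_distrib_left
    by (intro sum_mono floor_div_bounds(1) assms(1)) simp
  have "real (Sigma_sum T b) \<le> (\<Sum>i\<in>T. d * (real (nat \<lfloor>real (b i) / d\<rfloor>) + 1))"
    unfolding Sigma_sum_def of_nat_sum
    by (intro sum_mono floor_div_bounds(2) assms(1)) simp
  also have "\<dots> = d * real (Sigma_sum T (\<lambda>i. nat \<lfloor>real (b i) / d\<rfloor>)) + d * real (card T)"
    unfolding Sigma_sum_def of_nat_sum by (simp add: sum_distrib_left sum.distrib distrib_left)
  finally show "real (Sigma_sum T b)
      \<le> d * real (Sigma_sum T (\<lambda>i. nat \<lfloor>real (b i) / d\<rfloor>)) + d * real (card T)" .
qed

lemma kSSR_feasible_part_subset:
  assumes "kSSR_feasible n k p T" "i \<in> {1..k}"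
  shows "T i \<subseteq> {1..n}"
  using assms unfolding kSSR_feasible_def by blast

lemma kSSR_feasible_part_has_index_ge:
  assumes "kSSR_feasible n k p T" "i \<in> {1..k}"
  obtains q where "q \<in> T i" "p \<le> q"
proof -
  have "finite (T i)"
    using kSSR_feasible_part_subset[OF assms] by (rule finite_subset) simp
  moreover have "T i \<noteq> {}" using assms unfolding kSSR_feasible_def by blast
  ultimately have "Max (T i) \<in> T i" by simp
  moreover have "p \<le> Max (T i)"
  proof (cases "i = 1")
    case True
    then show ?thesis using assms(1) unfolding kSSR_feasible_def by simp
  next
    case False
    then have "i \<in> {2..k}" using assms(2) by auto
    then show ?thesis using assms(1) unfolding kSSR_feasible_def by (blast intro: less_imp_le)
  qed
  ultimately show thesis using that by blast
qed

lemma kSSR_feasible_part_sum_ge: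
  assumes "kSSR_feasible n k p T" "i \<in> {1..k}" "sorted_ms n b" "1 \<le> p"
  shows "b p \<le> Sigma_sum (T i) b"
proof -
  obtain q where q: "q \<in> T i" "p \<le> q"
    using kSSR_feasible_part_has_index_ge[OF assms(1,2)] .
  have sub: "T i \<subseteq> {1..n}" using kSSR_feasible_part_subset[OF assms(1,2)] .
  then have "b p \<le> b q"
    using assms(3,4) q unfolding sorted_ms_def by auto
  also have "b q \<le> Sigma_sum (T i) b"
    unfolding Sigma_sum_def using q sub finite_subset by (blast intro: member_le_sum)
  finally show ?thesis .
qed

lemma kSSR_feasible_floor_div_bounds:
  assumes "kSSR_feasible n k p T" "i \<in> {1..k}" "0 < d"
  shows "d * real (Sigma_sum (T i) (\<lambda>j. nat \<lfloor>real (b j) / d\<rfloor>)) \<le> real (Sigma_sum (T i) b)"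
    and "real (Sigma_sum (T i) b)
           \<le> d * real (Sigma_sum (T i) (\<lambda>j. nat \<lfloor>real (b j) / d\<rfloor>)) + real n * d"
proof -
  have sub: "T i \<subseteq> {1..n}" using kSSR_feasible_part_subset[OF assms(1,2)] .
  then have fin: "finite (T i)" by (rule finite_subset) simp
  show "d * real (Sigma_sum (T i) (\<lambda>j. nat \<lfloor>real (b j) / d\<rfloor>)) \<le> real (Sigma_sum (T i) b)"
    using Sigma_sum_floor_div_bounds(1)[OF assms(3) fin] .
  have "card (T i) \<le> n" using card_mono[OF _ sub] by simp
  then have "d * real (card (T i)) \<le> real n * d" using assms(3) by simp
  then show "real (Sigma_sum (T i) b)
      \<le> d * real (Sigma_sum (T i) (\<lambda>j. nat \<lfloor>real (b j) / d\<rfloor>)) + real n * d"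
    using Sigma_sum_floor_div_bounds(2)[OF assms(3) fin, of b] by linarith
qed

lemma ratio_R_le_iff:
  assumes "1 \<le> k" "\<forall>i\<in>{1..k}. 0 < Sigma_sum (T i) b"
  shows "ratio_R k T b \<le> ereal C \<longleftrightarrow>
    (\<forall>i\<in>{1..k}. \<forall>j\<in>{1..k}. real (Sigma_sum (T i) b) \<le> C * real (Sigma_sum (T j) b))"
proof -
  let ?F = "(\<lambda>i. Sigma_sum (T i) b) ` {1..k}"
  have fin: "finite ?F" and ne: "?F \<noteq> {}" using assms(1) by auto
  obtain imax where imax: "imax \<in> {1..k}" "Max ?F = Sigma_sum (T imax) b"
    using Max_in[OF fin ne] by auto
  obtain imin where imin: "imin \<in> {1..k}" "Min ?F = Sigma_sum (T imin) b"
    using Min_in[OF fin ne] by auto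
  have min_pos: "0 < real (Min ?F)" using imin assms(2) by auto
  have bounds: "Min ?F \<le> Sigma_sum (T i) b" "Sigma_sum (T i) b \<le> Max ?F" if "i \<in> {1..k}" for i
    using Min_le[OF fin imageI[OF that]] Max_ge[OF fin imageI[OF that]] by simp_all
  have ratio: "ratio_R k T b = ereal (real (Max ?F) / real (Min ?F))"
    unfolding ratio_R_def Let_def using min_pos by simp
  show ?thesis
  proof
    assume "ratio_R k T b \<le> ereal C"
    then have max_le: "real (Max ?F) \<le> C * real (Min ?F)"
      unfolding ratio using min_pos by (simp add: divide_le_eq)
    then have "0 \<le> C * real (Min ?F)" using of_nat_0_le_iff[of "Max ?F"] by linarith
    then have "0 \<le> C" using min_pos by (simp add: zero_le_mult_iff)
    show "\<forall>i\<in>{1..k}. \<forall>j\<in>{1..k}. real (Sigma_sum (T i) b) \<le> C * real (Sigma_sum (T j) b)"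
    proof (intro ballI)
      fix i j assume "i \<in> {1..k}" "j \<in> {1..k}"
      have "real (Sigma_sum (T i) b) \<le> real (Max ?F)"
        using bounds(2)[OF \<open>i \<in> {1..k}\<close>] by simp
      also have "\<dots> \<le> C * real (Min ?F)" by (rule max_le)
      also have "\<dots> \<le> C * real (Sigma_sum (T j) b)"
        using bounds(1)[OF \<open>j \<in> {1..k}\<close>] \<open>0 \<le> C\<close> by (simp add: mult_left_mono)
      finally show "real (Sigma_sum (T i) b) \<le> C * real (Sigma_sum (T j) b)" .
    qed
  next
    assume "\<forall>i\<in>{1..k}. \<forall>j\<in>{1..k}. real (Sigma_sum (T i) b) \<le> C * real (Sigma_sum (T j) b)"
    then have "real (Max ?F) \<le> C * real (Min ?F)" using imax imin by simp
    then show "ratio_R k T b \<le> ereal C"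
      unfolding ratio using min_pos by (simp add: divide_le_eq)
  qed
qed

lemma ratio_R_eq_ereal:
  assumes "1 \<le> k" "\<forall>i\<in>{1..k}. 0 < Sigma_sum (T i) b"
  obtains \<rho> where "ratio_R k T b = ereal \<rho>" "1 \<le> \<rho>"
proof -
  let ?F = "(\<lambda>i. Sigma_sum (T i) b) ` {1..k}"
  have fin: "finite ?F" and ne: "?F \<noteq> {}" using assms(1) by auto
  have "Min ?F \<in> ?F" using Min_in[OF fin ne] .
  then have min_pos: "0 < Min ?F" using assms(2) by auto
  have "Min ?F \<le> Max ?F" using Min_le[OF fin Max_in[OF fin ne]] .
  then have "1 \<le> real (Max ?F) / real (Min ?F)" using min_pos by simp
  moreover have "ratio_R k T b = ereal (real (Max ?F) / real (Min ?F))"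
    unfolding ratio_R_def Let_def using min_pos by simp
  ultimately show thesis using that by blast
qed

text \<open>The weights \<open>c\<close> approximate \<open>b\<close> on the parts of \<open>T\<close> at scale \<open>\<delta>\<close>, with additive error
  \<open>\<eta> m\<close> relative to a common lower bound \<open>m\<close> of the parts (for the rounding of the
  theorem: \<open>m = a\<^sub>p\<close>, \<open>\<eta> = \<epsilon>/3\<close>).\<close>

locale scaled_rounding =
  fixes k :: nat and T :: "nat \<Rightarrow> nat set" and b c :: "nat \<Rightarrow> nat" and \<delta> \<eta> m :: real
  assumes k_pos: "1 \<le> k"
    and m_pos: "0 < m" and \<delta>_pos: "0 < \<delta>" and \<eta>_nonneg: "0 \<le> \<eta>" and \<eta>_less_1: "\<eta> < 1"
    and part_ge: "i \<in> {1..k} \<Longrightarrow> m \<le> real (Sigma_sum (T i) b)"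
    and rounded_below: "i \<in> {1..k} \<Longrightarrow> \<delta> * real (Sigma_sum (T i) c) \<le> real (Sigma_sum (T i) b)"
    and rounded_above:
      "i \<in> {1..k} \<Longrightarrow> real (Sigma_sum (T i) b) \<le> \<delta> * real (Sigma_sum (T i) c) + \<eta> * m"
begin

lemma b_parts_pos: "\<forall>i\<in>{1..k}. 0 < Sigma_sum (T i) b"
  using part_ge m_pos by (metis of_nat_0_less_iff order_less_le_trans)

lemma b_part_le_rounded:
  assumes "i \<in> {1..k}"
  shows "(1 - \<eta>) * real (Sigma_sum (T i) b) \<le> \<delta> * real (Sigma_sum (T i) c)"
proof -
  have "\<eta> * m \<le> \<eta> * real (Sigma_sum (T i) b)"
    using part_ge[OF assms] \<eta>_nonneg by (rule mult_left_mono)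
  moreover have "(1 - \<eta>) * real (Sigma_sum (T i) b)
      = real (Sigma_sum (T i) b) - \<eta> * real (Sigma_sum (T i) b)"
    by (simp add: algebra_simps)
  ultimately show ?thesis using rounded_above[OF assms] by linarith
qed

lemma c_parts_pos: "\<forall>i\<in>{1..k}. 0 < Sigma_sum (T i) c"
proof
  fix i assume i: "i \<in> {1..k}"
  have "0 < (1 - \<eta>) * real (Sigma_sum (T i) b)"
    using b_parts_pos i \<eta>_less_1 by simp
  then have "0 < \<delta> * real (Sigma_sum (T i) c)"
    using b_part_le_rounded[OF i] by linarith
  then show "0 < Sigma_sum (T i) c" using \<delta>_pos by (simp add: zero_less_mult_iff)
qed

lemma ratio_rounded_le: "ratio_R k T c \<le> ereal (1 / (1 - \<eta>)) * ratio_R k T b"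
proof -
  obtain \<rho> where \<rho>: "ratio_R k T b = ereal \<rho>" "1 \<le> \<rho>"
    using ratio_R_eq_ereal[OF k_pos b_parts_pos] .
  have b_pairwise: "real (Sigma_sum (T i) b) \<le> \<rho> * real (Sigma_sum (T j) b)"
    if "i \<in> {1..k}" "j \<in> {1..k}" for i j
    using ratio_R_le_iff[OF k_pos b_parts_pos, of \<rho>] \<rho>(1) that by simp
  have "real (Sigma_sum (T i) c) \<le> \<rho> / (1 - \<eta>) * real (Sigma_sum (T j) c)"
    if i: "i \<in> {1..k}" and j: "j \<in> {1..k}" for i j
  proof -
    have "(1 - \<eta>) * (\<delta> * real (Sigma_sum (T i) c)) \<le> (1 - \<eta>) * real (Sigma_sum (T i) b)"
      using rounded_below[OF i] \<eta>_less_1 by simp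
    also have "\<dots> \<le> \<rho> * ((1 - \<eta>) * real (Sigma_sum (T j) b))"
      using b_pairwise[OF i j] \<eta>_less_1 by (simp add: mult.left_commute)
    also have "\<dots> \<le> \<rho> * (\<delta> * real (Sigma_sum (T j) c))"
      using b_part_le_rounded[OF j] \<rho>(2) by simp
    finally have "(1 - \<eta>) * real (Sigma_sum (T i) c) \<le> \<rho> * real (Sigma_sum (T j) c)"
      using \<delta>_pos by (simp add: mult.left_commute)
    then show ?thesis using \<eta>_less_1 by (simp add: field_simps)
  qed
  then have "ratio_R k T c \<le> ereal (\<rho> / (1 - \<eta>))"
    using ratio_R_le_iff[OF k_pos c_parts_pos] by blast
  then show ?thesis using \<rho>(1) by simp
qed

lemma ratio_le_of_rounded:
  assumes "ratio_R k T c \<le> ereal \<rho>"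
  shows "ratio_R k T b \<le> ereal (\<rho> + \<eta>)"
proof -
  have c_pairwise: "real (Sigma_sum (T i) c) \<le> \<rho> * real (Sigma_sum (T j) c)"
    if "i \<in> {1..k}" "j \<in> {1..k}" for i j
    using ratio_R_le_iff[OF k_pos c_parts_pos] assms that by blast
  have "0 < real (Sigma_sum (T 1) c)" using c_parts_pos k_pos by simp
  moreover have "real (Sigma_sum (T 1) c) \<le> \<rho> * real (Sigma_sum (T 1) c)"
    using c_pairwise k_pos by simp
  ultimately have \<rho>_nonneg: "0 \<le> \<rho>" by (simp add: zero_le_mult_iff)
  have "real (Sigma_sum (T i) b) \<le> (\<rho> + \<eta>) * real (Sigma_sum (T j) b)"
    if i: "i \<in> {1..k}" and j: "j \<in> {1..k}" for i j
  proof -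
    have "real (Sigma_sum (T i) b) \<le> \<delta> * real (Sigma_sum (T i) c) + \<eta> * m"
      using rounded_above[OF i] .
    also have "\<dots> \<le> \<rho> * (\<delta> * real (Sigma_sum (T j) c)) + \<eta> * real (Sigma_sum (T j) b)"
      using c_pairwise[OF i j] \<delta>_pos part_ge[OF j] \<eta>_nonneg
      by (intro add_mono) (simp_all add: mult.left_commute mult_left_mono)
    also have "\<dots> \<le> (\<rho> + \<eta>) * real (Sigma_sum (T j) b)"
      using rounded_below[OF j] \<rho>_nonneg by (simp add: distrib_right mult_left_mono)
    finally show ?thesis .
  qed
  then show ?thesis using ratio_R_le_iff[OF k_pos b_parts_pos] by blast
qed

end

lemma kSSR_feasible_scaled_rounding:
  assumes "kSSR_feasible n k p T" "1 \<le> k" "sorted_ms n b" "1 \<le> p" "0 < b p"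
    and "0 < \<delta>" "0 \<le> \<eta>" "\<eta> < 1" "real n * \<delta> \<le> \<eta> * real (b p)"
  shows "scaled_rounding k T b (\<lambda>i. nat \<lfloor>real (b i) / \<delta>\<rfloor>) \<delta> \<eta> (real (b p))"
proof
  fix i assume i: "i \<in> {1..k}"
  show "real (b p) \<le> real (Sigma_sum (T i) b)"
    using kSSR_feasible_part_sum_ge[OF assms(1) i assms(3,4)] by simp
  show "\<delta> * real (Sigma_sum (T i) (\<lambda>i. nat \<lfloor>real (b i) / \<delta>\<rfloor>)) \<le> real (Sigma_sum (T i) b)"
    using kSSR_feasible_floor_div_bounds(1)[OF assms(1) i assms(6)] .
  show "real (Sigma_sum (T i) b)
      \<le> \<delta> * real (Sigma_sum (T i) (\<lambda>i. nat \<lfloor>real (b i) / \<delta>\<rfloor>)) + \<eta> * real (b p)"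
    using kSSR_feasible_floor_div_bounds(2)[OF assms(1) i assms(6), of b] assms(9) by linarith
qed (use assms in simp_all)

lemma div_one_minus_plus_le:
  fixes \<rho> \<eta> :: real
  assumes "1 \<le> \<rho>" "0 \<le> \<eta>" "2 * \<eta> \<le> 1"
  shows "\<rho> / (1 - \<eta>) + \<eta> \<le> (1 + 3 * \<eta>) * \<rho>"
proof -
  have "0 \<le> \<eta> * (1 - 2 * \<eta>) * \<rho>" using assms by simp
  then have "\<rho> \<le> (1 + 2 * \<eta>) * \<rho> * (1 - \<eta>)" by (simp add: algebra_simps)
  then have "\<rho> / (1 - \<eta>) \<le> (1 + 2 * \<eta>) * \<rho>" using assms(3) by (simp add: divide_le_eq)
  moreover have "\<eta> \<le> \<eta> * \<rho>" using assms(1,2) by (simp add: mult_le_cancel_left1)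
  ultimately show ?thesis by (simp add: algebra_simps)
qed

theorem theorem14:
  fixes n k p :: nat and a :: "nat \<Rightarrow> nat" and \<epsilon> :: real
    and S Sstar :: "nat \<Rightarrow> nat set"
  assumes "k \<ge> 2"
    and "\<forall>i\<in>{1..n}. a i > 0"
    and "sorted_ms n a"
    and "1 \<le> p" and "p + k \<le> n + 1"
    and "0 < \<epsilon>" and "\<epsilon> < 1"
    and "kSSR_optimal n k (\<lambda>i. nat \<lfloor>real (a i) / (\<epsilon> * real (a p) / (3 * real n))\<rfloor>) p S"
    and "kSSR_optimal n k a p Sstar"
  shows "ratio_R k S a \<le> ereal (1 + \<epsilon>) * ratio_R k Sstar a"
proof -
  define \<delta> where "\<delta> = \<epsilon> * real (a p) / (3 * real n)"
  define r where "r = (\<lambda>i. nat \<lfloor>real (a i) / \<delta>\<rfloor>)"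
  have "0 < n" and a_p_pos: "0 < a p" using assms(1,2,4,5) by auto
  then have "0 < \<delta>" "real n * \<delta> = \<epsilon> / 3 * real (a p)"
    unfolding \<delta>_def using assms(6) by simp_all
  then have rounding: "scaled_rounding k T a r \<delta> (\<epsilon> / 3) (real (a p))"
    if "kSSR_feasible n k p T" for T
    unfolding r_def using kSSR_feasible_scaled_rounding that assms(1,3,4,6,7) a_p_pos by simp
  have opt_S: "kSSR_optimal n k r p S" using assms(8) unfolding r_def \<delta>_def .
  interpret S: scaled_rounding k S a r \<delta> "\<epsilon> / 3" "real (a p)"
    using rounding opt_S unfolding kSSR_optimal_def by blast
  interpret Sstar: scaled_rounding k Sstar a r \<delta> "\<epsilon> / 3" "real (a p)"
    using rounding assms(9) unfolding kSSR_optimal_def by blast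
  obtain \<rho> where \<rho>: "ratio_R k Sstar a = ereal \<rho>" "1 \<le> \<rho>"
    using ratio_R_eq_ereal[OF Sstar.k_pos Sstar.b_parts_pos] .
  have "ratio_R k S r \<le> ratio_R k Sstar r"
    using opt_S assms(9) unfolding kSSR_optimal_def by blast
  also have "\<dots> \<le> ereal (\<rho> / (1 - \<epsilon> / 3))"
    using Sstar.ratio_rounded_le \<rho>(1) by simp
  finally have "ratio_R k S a \<le> ereal (\<rho> / (1 - \<epsilon> / 3) + \<epsilon> / 3)"
    by (rule S.ratio_le_of_rounded)
  also have "\<dots> \<le> ereal ((1 + \<epsilon>) * \<rho>)"
    using div_one_minus_plus_le[OF \<rho>(2), of "\<epsilon> / 3"] assms(6,7) by simp
  finally show ?thesis using \<rho>(1) by simp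
qed

end
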